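(* Let $X$ be a $\mathbb{Q}$-factorial projective toric variety defined over $\overline{\mathbb{Q}}$ and let $f\colon X\to X$ be a surjective toric morphism. Then the set of pre-periodic points of $f$ is Zariski dense in $X$.
   Context: A toric morphism is a morphism of toric varieties induced by a map of lattices compatible with the fans (equivariant with respect to the torus actions). A point $x$ is pre-periodic for $f$ if $f^{n}(x)=f^{m}(x)$ for some $0\le n<m$. *)

theory Defs
  imports "HOL-Analysis.Analysis" "HOL-Computational_Algebra.Polynomial"
begin

text \<open>Lattice N = int^n, dual lattice M = int^n, N_R = real^n; the pairing of m in M
  with u in N_R is the standard inner product after coercing m to real.\<close>

definition vreal :: "int ^ 'n \<Rightarrow> real ^ 'n" where
  "vreal m = (\<chi> i. real_of_int (m $ i))"

definition normal_cone :: "(real ^ 'n) set \<Rightarrow> (real ^ 'n) set \<Rightarrow> (real ^ 'n) set" where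
  "normal_cone P F = {u. \<forall>p\<in>P. \<forall>q\<in>F. q \<bullet> u \<le> p \<bullet> u}"

definition normal_fan :: "(real ^ 'n) set \<Rightarrow> (real ^ 'n) set set" where
  "normal_fan P = {normal_cone P F | F. F face_of P \<and> F \<noteq> {}}"

text \<open>A fan defines a projective toric variety iff it is the normal fan of a
  full-dimensional lattice polytope.\<close>
definition projective_fan :: "(real ^ 'n) set set \<Rightarrow> bool" where
  "projective_fan \<Sigma> \<longleftrightarrow> (\<exists>V :: (int ^ 'n) set. finite V \<and>
      interior (convex hull (vreal ` V)) \<noteq> {} \<and> \<Sigma> = normal_fan (convex hull (vreal ` V)))"

text \<open>Q-factorial iff the fan is simplicial.\<close>
definition simplicial_fan :: "(real ^ 'n) set set \<Rightarrow> bool" where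
  "simplicial_fan \<Sigma> \<longleftrightarrow> (\<forall>\<sigma>\<in>\<Sigma>. \<exists>B. independent B \<and> \<sigma> = convex_cone hull B)"

definition dual_lat :: "(real ^ 'n) set \<Rightarrow> (int ^ 'n) set" where
  "dual_lat \<sigma> = {m. \<forall>u\<in>\<sigma>. 0 \<le> vreal m \<bullet> u}"

definition perp_lat :: "(real ^ 'n) set \<Rightarrow> (int ^ 'n) set" where
  "perp_lat \<sigma> = {m. \<forall>u\<in>\<sigma>. vreal m \<bullet> u = 0}"

text \<open>Points of X_Sigma over Qbar (algebraic complex numbers), via the orbit-cone
  correspondence: a point is a pair (sigma, gamma) with sigma a cone of the fan and gamma a group
  homomorphism from the lattice perp_lat sigma to Qbar^*, extended by 0 outside. In the
  affine chart U_tau (sigma a face of tau) the point is the semigroup homomorphism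
  dual_lat tau -> Qbar given by gamma.\<close>
type_synonym 'n tpoint = "(real ^ 'n) set \<times> (int ^ 'n \<Rightarrow> complex)"

definition orbit_hom :: "(real ^ 'n) set \<Rightarrow> (int ^ 'n \<Rightarrow> complex) \<Rightarrow> bool" where
  "orbit_hom \<sigma> \<gamma> \<longleftrightarrow>
     (\<forall>m\<in>perp_lat \<sigma>. \<gamma> m \<noteq> 0 \<and> algebraic (\<gamma> m)) \<and>
     (\<forall>m\<in>perp_lat \<sigma>. \<forall>m'\<in>perp_lat \<sigma>. \<gamma> (m + m') = \<gamma> m * \<gamma> m') \<and>
     (\<forall>m. m \<notin> perp_lat \<sigma> \<longrightarrow> \<gamma> m = 0)"

definition toric_points :: "(real ^ 'n) set set \<Rightarrow> 'n tpoint set" where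
  "toric_points \<Sigma> = {(\<sigma>, \<gamma>). \<sigma> \<in> \<Sigma> \<and> orbit_hom \<sigma> \<gamma>}"

definition chart :: "(real ^ 'n) set set \<Rightarrow> (real ^ 'n) set \<Rightarrow> 'n tpoint set" where
  "chart \<Sigma> \<tau> = {p \<in> toric_points \<Sigma>. fst p face_of \<tau>}"

text \<open>Regular functions on U_tau over Qbar: finite Qbar-linear combinations of characters
  chi^m with m in dual_lat tau.\<close>
definition regular_fun :: "(real ^ 'n) set \<Rightarrow> (int ^ 'n \<Rightarrow> complex) \<Rightarrow> bool" where
  "regular_fun \<tau> g \<longleftrightarrow> finite {m. g m \<noteq> 0} \<and> {m. g m \<noteq> 0} \<subseteq> dual_lat \<tau> \<and>
     (\<forall>m. algebraic (g m))"

definition eval_fun :: "(int ^ 'n \<Rightarrow> complex) \<Rightarrow> 'n tpoint \<Rightarrow> complex" where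
  "eval_fun g p = (\<Sum>m\<in>{m. g m \<noteq> 0}. g m * snd p m)"

definition zariski_closed :: "(real ^ 'n) set set \<Rightarrow> 'n tpoint set \<Rightarrow> bool" where
  "zariski_closed \<Sigma> C \<longleftrightarrow> C \<subseteq> toric_points \<Sigma> \<and>
     (\<forall>\<tau>\<in>\<Sigma>. \<exists>G. (\<forall>g\<in>G. regular_fun \<tau> g) \<and>
        C \<inter> chart \<Sigma> \<tau> = {p \<in> chart \<Sigma> \<tau>. \<forall>g\<in>G. eval_fun g p = 0})"

definition zariski_dense :: "(real ^ 'n) set set \<Rightarrow> 'n tpoint set \<Rightarrow> bool" where
  "zariski_dense \<Sigma> S \<longleftrightarrow>
     (\<forall>C. zariski_closed \<Sigma> C \<and> S \<subseteq> C \<longrightarrow> C = toric_points \<Sigma>)"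

definition lat_map_real :: "int ^ 'n ^ 'n \<Rightarrow> real ^ 'n \<Rightarrow> real ^ 'n" where
  "lat_map_real A u = (\<chi> i. \<Sum>j\<in>UNIV. real_of_int (A $ i $ j) * u $ j)"

definition lat_map_dual :: "int ^ 'n ^ 'n \<Rightarrow> int ^ 'n \<Rightarrow> int ^ 'n" where
  "lat_map_dual A m = (\<chi> j. \<Sum>i\<in>UNIV. A $ i $ j * m $ i)"

definition compatible_lat_map :: "(real ^ 'n) set set \<Rightarrow> int ^ 'n ^ 'n \<Rightarrow> bool" where
  "compatible_lat_map \<Sigma> A \<longleftrightarrow> (\<forall>\<sigma>\<in>\<Sigma>. \<exists>\<sigma>'\<in>\<Sigma>. lat_map_real A ` \<sigma> \<subseteq> \<sigma>')"

definition target_cone :: "(real ^ 'n) set set \<Rightarrow> int ^ 'n ^ 'n \<Rightarrow> (real ^ 'n) set \<Rightarrow> (real ^ 'n) set" where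
  "target_cone \<Sigma> A \<sigma> = \<Inter>{\<tau>\<in>\<Sigma>. lat_map_real A ` \<sigma> \<subseteq> \<tau>}"

text \<open>The toric morphism induced by A on points: the orbit of sigma goes to the orbit of the
  smallest cone containing phi(sigma), and on characters it is given by the dual map.\<close>
definition toric_map :: "(real ^ 'n) set set \<Rightarrow> int ^ 'n ^ 'n \<Rightarrow> 'n tpoint \<Rightarrow> 'n tpoint" where
  "toric_map \<Sigma> A p = (let \<sigma>' = target_cone \<Sigma> A (fst p) in
      (\<sigma>', \<lambda>m. if m \<in> perp_lat \<sigma>' then snd p (lat_map_dual A m) else 0))"

definition preperiodic_points :: "('a \<Rightarrow> 'a) \<Rightarrow> 'a set \<Rightarrow> 'a set" where
  "preperiodic_points f X = {x\<in>X. \<exists>n m. n < m \<and> (f ^^ n) x = (f ^^ m) x}"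

end

theory Submission
  imports Defs
begin

(* Torsion points of the dense torus are preperiodic for every toric morphism: the morphism
   sends the N-torsion point k/N to (A k)/N, and there are only finitely many N-torsion points.
   They are Zariski dense: on an affine chart a regular function is a finite sum of characters
   g_m chi^m. Choose w such that m -> <w, m> is injective on the support of g; at the torsion
   points j w / N the function becomes a one-variable Laurent polynomial in zeta_N^j, which
   vanishes at every root of unity and is therefore zero. *)

lemma preperiodic_if_finite_orbit:
  assumes "finite (range (\<lambda>j. (f ^^ j) x))"
  shows "\<exists>n m. n < m \<and> (f ^^ n) x = (f ^^ m) x"
proof -
  have "\<not> inj (\<lambda>j. (f ^^ j) x)"
    using assms finite_imageD by blast
  then obtain a b where "a \<noteq> b" "(f ^^ a) x = (f ^^ b) x"
    unfolding inj_def by blast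
  then show ?thesis
    by (metis linorder_neq_iff)
qed

lemma laurent_coeff_eq_0_if_infinite_roots:
  fixes c :: "'b \<Rightarrow> 'a::field" and \<epsilon> :: "'b \<Rightarrow> int"
  assumes "finite S" "inj_on \<epsilon> S" "infinite Z" "0 \<notin> Z"
    and vanish: "\<And>z. z \<in> Z \<Longrightarrow> (\<Sum>s\<in>S. c s * z powi \<epsilon> s) = 0"
    and "s \<in> S"
  shows "c s = 0"
proof -
  define d where "d = Min (\<epsilon> ` S)"
  have d_le: "d \<le> \<epsilon> s" if "s \<in> S" for s
    using assms(1) that by (simp add: d_def)
  \<comment> \<open>the Laurent polynomial divided by z powi d\<close>
  define p where "p = (\<Sum>s\<in>S. monom (c s) (nat (\<epsilon> s - d)))"
  have "poly p z = 0" if "z \<in> Z" for z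
  proof -
    have "z \<noteq> 0"
      using that assms(4) by auto
    have "z powi \<epsilon> s = z ^ nat (\<epsilon> s - d) * z powi d" if "s \<in> S" for s
    proof -
      have "z powi \<epsilon> s = z powi (\<epsilon> s - d) * z powi d"
        using power_int_add[of z "\<epsilon> s - d" d] \<open>z \<noteq> 0\<close> by simp
      also have "z powi (\<epsilon> s - d) = z ^ nat (\<epsilon> s - d)"
        using d_le[OF that] by (metis int_nat_eq power_int_of_nat diff_ge_0_iff_ge)
      finally show ?thesis .
    qed
    then have "poly p z * z powi d = 0"
      using vanish[OF that]
      by (simp add: p_def poly_sum poly_monom sum_distrib_right mult.assoc)
    then show ?thesis
      using \<open>z \<noteq> 0\<close> by simp
  qed
  then have "Z \<subseteq> {z. poly p z = 0}"
    by blast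
  then have "p = 0"
    using assms(3) poly_roots_finite finite_subset by blast
  have "coeff p (nat (\<epsilon> s - d)) = (\<Sum>s'\<in>S. if s' = s then c s' else 0)"
    unfolding p_def coeff_sum coeff_monom
    by (rule sum.cong) (use assms(2,6) d_le in \<open>auto simp: inj_on_def eq_nat_nat_iff\<close>)
  then show ?thesis
    using \<open>p = 0\<close> assms(1,6) by simp
qed

definition unit_root :: "nat \<Rightarrow> complex" where
  "unit_root N = exp (2 * of_real pi * \<i> / of_nat N)"

lemma unit_root_nonzero [simp]: "unit_root N \<noteq> 0"
  by (simp add: unit_root_def)

lemma unit_root_power_eq_1: "0 < N \<Longrightarrow> unit_root N ^ N = 1"
  using complex_root_unity[of N 1] by (simp add: unit_root_def)

lemma root_of_unity_eq_unit_root_power: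
  assumes "0 < N" "z ^ N = 1"
  obtains j where "z = unit_root N ^ j"
proof -
  obtain j :: nat where "z = exp (of_nat j * (2 * of_real pi * \<i> / of_nat N))"
    using assms complex_roots_unity[of N] by (auto simp: mult_ac)
  then have "z = unit_root N ^ j"
    by (simp only: unit_root_def exp_of_nat_mult)
  then show ?thesis
    by (rule that)
qed

lemma unit_root_powi_cong:
  assumes "0 < N" "a mod int N = b mod int N"
  shows "unit_root N powi a = unit_root N powi b"
proof -
  obtain t where "a = b + int N * t"
    using assms(2) by (metis mod_eq_dvd_iff dvdE eq_diff_eq add.commute)
  then show ?thesis
    using unit_root_power_eq_1[OF assms(1)] by (simp add: power_int_add power_int_mult)
qed

lemma infinite_roots_of_unity: "infinite {z::complex. \<exists>N>0. z ^ N = 1}" (is "infinite ?U")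
proof
  assume "finite ?U"
  moreover have "{z. z ^ Suc (card ?U) = 1} \<subseteq> ?U"
    by blast
  ultimately have "card {z::complex. z ^ Suc (card ?U) = 1} \<le> card ?U"
    by (rule card_mono)
  then show False
    using card_complex_roots_unity[of "Suc (card ?U)"] by simp
qed

lemma algebraic_root_of_unity:
  assumes "0 < N" "z ^ N = 1"
  shows "algebraic z"
  by (rule algebraic_root[where y = 1 and p = "monom 1 N"])
    (use assms in \<open>auto simp: poly_monom coeff_monom degree_monom_eq\<close>)

definition lattice_pairing :: "int ^ 'n \<Rightarrow> int ^ 'n \<Rightarrow> int" where
  "lattice_pairing k m = (\<Sum>i\<in>UNIV. k $ i * m $ i)"

lemma lattice_pairing_add_right:
  "lattice_pairing k (m + m') = lattice_pairing k m + lattice_pairing k m'"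
  by (simp add: lattice_pairing_def distrib_left sum.distrib)

lemma lattice_pairing_diff_right:
  "lattice_pairing k (m - m') = lattice_pairing k m - lattice_pairing k m'"
  by (simp add: lattice_pairing_def right_diff_distrib sum_subtractf)

lemma lattice_pairing_scale_left:
  "lattice_pairing (c *s w) m = c * lattice_pairing w m"
  by (simp add: lattice_pairing_def sum_distrib_left mult.assoc)

lemma lattice_pairing_lat_map_dual:
  "lattice_pairing k (lat_map_dual A m) = lattice_pairing (A *v k) m"
proof -
  have "lattice_pairing k (lat_map_dual A m) = (\<Sum>j\<in>UNIV. \<Sum>i\<in>UNIV. k $ j * A $ i $ j * m $ i)"
    by (simp add: lattice_pairing_def lat_map_dual_def sum_distrib_left mult.assoc)
  also have "\<dots> = (\<Sum>i\<in>UNIV. \<Sum>j\<in>UNIV. k $ j * A $ i $ j * m $ i)"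
    by (rule sum.swap)
  also have "\<dots> = lattice_pairing (A *v k) m"
    by (simp add: lattice_pairing_def matrix_vector_mult_def sum_distrib_left mult_ac)
  finally show ?thesis .
qed

lemma lattice_pairing_mod:
  "lattice_pairing (\<chi> i. k $ i mod c) m mod c = lattice_pairing k m mod c"
proof -
  have "lattice_pairing (\<chi> i. k $ i mod c) m mod c = (\<Sum>i\<in>UNIV. (k $ i mod c) * m $ i mod c) mod c"
    unfolding lattice_pairing_def by (simp only: vec_lambda_beta mod_sum_eq)
  also have "\<dots> = (\<Sum>i\<in>UNIV. k $ i * m $ i mod c) mod c"
    by (simp only: mod_mult_left_eq)
  also have "\<dots> = lattice_pairing k m mod c"
    unfolding lattice_pairing_def by (simp only: mod_sum_eq)
  finally show ?thesis .
qed

lemma lattice_pairing_self_pos: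
  assumes "d \<noteq> 0"
  shows "0 < lattice_pairing d d"
proof -
  obtain i where "d $ i \<noteq> 0"
    using assms by (auto simp: vec_eq_iff)
  then have "0 < d $ i * d $ i"
    by (auto simp: zero_less_mult_iff linorder_neq_iff)
  also have "\<dots> \<le> lattice_pairing d d"
    unfolding lattice_pairing_def by (rule member_le_sum) auto
  finally show ?thesis .
qed

lemma exists_lattice_pairing_nonzero:
  fixes D :: "(int ^ 'n) set"
  assumes "finite D" "0 \<notin> D"
  shows "\<exists>w. \<forall>d\<in>D. lattice_pairing w d \<noteq> 0"
  using assms
proof (induction D rule: finite_induct)
  case empty
  then show ?case by simp
next
  case (insert d D)
  then obtain w where w: "\<forall>d'\<in>D. lattice_pairing w d' \<noteq> 0"
    by auto
  show ?case
  proof (cases "lattice_pairing w d = 0")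
    case False
    then show ?thesis
      using w by auto
  next
    case True
    \<comment> \<open>Perturb by d: a large multiple of w keeps the pairings with D away from 0.\<close>
    define M where "M = 1 + (\<Sum>d'\<in>D. \<bar>lattice_pairing d d'\<bar>)"
    have pairing_w': "lattice_pairing (M *s w + d) x = M * lattice_pairing w x + lattice_pairing d x" for x
      by (simp add: lattice_pairing_def distrib_right sum.distrib sum_distrib_left mult.assoc)
    have "lattice_pairing (M *s w + d) d \<noteq> 0"
      using True lattice_pairing_self_pos[of d] insert.prems by (simp add: pairing_w')
    moreover have "lattice_pairing (M *s w + d) d' \<noteq> 0" if "d' \<in> D" for d'
    proof -
      have "\<bar>lattice_pairing d d'\<bar> < M"
        using member_le_sum[of d' D "\<lambda>d'. \<bar>lattice_pairing d d'\<bar>"] that insert.hyps(1)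
        by (simp add: M_def)
      moreover have "M \<le> \<bar>M * lattice_pairing w d'\<bar>"
      proof -
        have "1 \<le> \<bar>lattice_pairing w d'\<bar>"
          using w that by auto
        moreover have "0 < M"
          by (simp add: M_def add_pos_nonneg sum_nonneg)
        ultimately show ?thesis
          by (simp add: abs_mult)
      qed
      ultimately show ?thesis
        by (simp add: pairing_w')
    qed
    ultimately show ?thesis
      by auto
  qed
qed

lemma exists_lattice_pairing_inj_on:
  fixes S :: "(int ^ 'n) set"
  assumes "finite S"
  shows "\<exists>w. inj_on (lattice_pairing w) S"
proof -
  define D where "D = {m - m' | m m'. m \<in> S \<and> m' \<in> S \<and> m \<noteq> m'}"
  have "D \<subseteq> (\<lambda>(m, m'). m - m') ` (S \<times> S)"
    by (auto simp: D_def)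
  then have "finite D"
    using assms finite_subset by blast
  moreover have "0 \<notin> D"
    by (auto simp: D_def)
  ultimately obtain w where w: "\<forall>d\<in>D. lattice_pairing w d \<noteq> 0"
    using exists_lattice_pairing_nonzero by blast
  have "inj_on (lattice_pairing w) S"
  proof (rule inj_onI, rule ccontr)
    fix m m' assume "m \<in> S" "m' \<in> S" "lattice_pairing w m = lattice_pairing w m'" "m \<noteq> m'"
    then have "m - m' \<in> D"
      by (auto simp: D_def)
    then show False
      using w \<open>lattice_pairing w m = lattice_pairing w m'\<close> by (auto simp: lattice_pairing_diff_right)
  qed
  then show ?thesis ..
qed

lemma zero_face_of_pointed_cone:
  assumes "cone S" "0 \<in> S" "\<And>u. u \<in> S \<Longrightarrow> -u \<in> S \<Longrightarrow> u = 0"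
  shows "{0} face_of S"
  unfolding face_of_singleton extreme_point_of_def
proof (intro conjI assms(2) ballI notI)
  fix a b assume "a \<in> S" "b \<in> S" "0 \<in> open_segment a b"
  then obtain t where t: "a \<noteq> b" "0 < t" "t < 1" "(1 - t) *\<^sub>R a + t *\<^sub>R b = 0"
    by (auto simp: in_segment)
  have "-a = (1 / (1 - t)) *\<^sub>R ((1 - t) *\<^sub>R (-a))"
    using t by simp
  also have "(1 - t) *\<^sub>R (-a) = t *\<^sub>R b"
    using add.inverse_unique[OF t(4)] by simp
  finally have "-a \<in> S"
    using assms(1) \<open>b \<in> S\<close> t by (simp add: cone_def)
  then have "a = 0"
    using assms(3) \<open>a \<in> S\<close> by blast
  then show False
    using t by simp
qed

lemma zero_in_normal_cone: "0 \<in> normal_cone P F"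
  by (simp add: normal_cone_def)

lemma cone_normal_cone: "cone (normal_cone P F)"
  by (auto simp: cone_def normal_cone_def intro: mult_left_mono)

lemma normal_cone_pointed:
  fixes P :: "(real ^ 'n) set"
  assumes "interior P \<noteq> {}" "F \<noteq> {}" "u \<in> normal_cone P F" "-u \<in> normal_cone P F"
  shows "u = 0"
proof (rule ccontr)
  assume "u \<noteq> 0"
  obtain q where "q \<in> F"
    using assms(2) by blast
  then have "P \<subseteq> {p. u \<bullet> p = u \<bullet> q}"
    using assms(3,4) by (force simp: normal_cone_def inner_commute)
  then have "interior P \<subseteq> interior {p. u \<bullet> p = u \<bullet> q}"
    by (rule interior_mono)
  then show False
    using assms(1) \<open>u \<noteq> 0\<close> by simp
qed

lemma convex_normal_cone: "convex (normal_cone P F)"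
proof -
  have "normal_cone P F = (\<Inter>p\<in>P. \<Inter>q\<in>F. {u. (q - p) \<bullet> u \<le> 0})"
    by (auto simp: normal_cone_def inner_diff_left)
  then show ?thesis
    by (simp add: convex_INT convex_halfspace_le)
qed

lemma zero_cone_in_normal_fan:
  fixes P :: "(real ^ 'n) set"
  assumes "convex P" "interior P \<noteq> {}"
  shows "{0} \<in> normal_fan P"
proof -
  have "P \<noteq> {}"
    using assms(2) interior_subset by blast
  have "-u \<in> normal_cone P P" if "u \<in> normal_cone P P" for u
    using that by (force simp: normal_cone_def)
  then have "normal_cone P P = {0}"
    using normal_cone_pointed[OF assms(2) \<open>P \<noteq> {}\<close>] zero_in_normal_cone by blast
  then show ?thesis
    using \<open>P \<noteq> {}\<close> face_of_refl[OF assms(1)] by (auto simp: normal_fan_def)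
qed

lemma zero_face_of_normal_fan_cone:
  fixes P :: "(real ^ 'n) set"
  assumes "interior P \<noteq> {}" "\<sigma> \<in> normal_fan P"
  shows "{0} face_of \<sigma>"
proof -
  obtain F where \<sigma>: "\<sigma> = normal_cone P F" and "F \<noteq> {}"
    using assms(2) by (auto simp: normal_fan_def)
  show ?thesis
    unfolding \<sigma> using normal_cone_pointed[OF assms(1) \<open>F \<noteq> {}\<close>]
    by (rule zero_face_of_pointed_cone[OF cone_normal_cone zero_in_normal_cone])
qed

definition torsion_char :: "nat \<Rightarrow> int ^ 'n \<Rightarrow> int ^ 'n \<Rightarrow> complex" where
  "torsion_char N k m = unit_root N powi lattice_pairing k m"

text \<open>The torsion point k/N of the dense torus, the orbit of the zero cone.\<close>
definition torsion_point :: "nat \<Rightarrow> int ^ 'n \<Rightarrow> 'n tpoint" where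
  "torsion_point N k = ({0}, torsion_char N k)"

lemma perp_lat_zero [simp]: "perp_lat {0} = UNIV"
  by (simp add: perp_lat_def)

lemma orbit_hom_torsion_char:
  assumes "0 < N"
  shows "orbit_hom {0} (torsion_char N k)"
proof -
  have "algebraic (torsion_char N k m)" for m
  proof (rule algebraic_root_of_unity[OF assms])
    show "torsion_char N k m ^ N = 1"
      using unit_root_power_eq_1[OF assms]
      by (simp add: torsion_char_def power_int_power' mult.commute[of _ "int N"] power_int_mult)
  qed
  then show ?thesis
    by (simp add: orbit_hom_def torsion_char_def lattice_pairing_add_right power_int_add)
qed

lemma torsion_point_in_toric_points:
  "{0} \<in> \<Sigma> \<Longrightarrow> 0 < N \<Longrightarrow> torsion_point N k \<in> toric_points \<Sigma>"
  by (simp add: toric_points_def torsion_point_def orbit_hom_torsion_char)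

lemma torsion_point_mod:
  assumes "0 < N"
  shows "torsion_point N (\<chi> i. k $ i mod int N) = torsion_point N k"
  by (simp add: torsion_point_def torsion_char_def fun_eq_iff
      unit_root_powi_cong[OF assms lattice_pairing_mod])

lemma finite_torsion_points:
  assumes "0 < N"
  shows "finite (range (torsion_point N :: int ^ 'n \<Rightarrow> 'n tpoint))"
proof -
  define R :: "(int ^ 'n) set" where "R = {k. \<forall>i. k $ i \<in> {0..<int N}}"
  have "vec_nth ` R \<subseteq> Pi\<^sub>E UNIV (\<lambda>_. {0..<int N})"
    by (auto simp: R_def)
  then have "finite (vec_nth ` R)"
    by (rule finite_subset) (simp add: finite_PiE)
  moreover have "inj_on vec_nth R"
    by (rule inj_onI) (simp add: vec_nth_inject)
  ultimately have "finite R"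
    by (rule finite_imageD)
  moreover have "torsion_point N k \<in> torsion_point N ` R" for k
  proof (rule image_eqI)
    show "torsion_point N k = torsion_point N (\<chi> i. k $ i mod int N)"
      by (rule torsion_point_mod[OF assms, symmetric])
    show "(\<chi> i. k $ i mod int N) \<in> R"
      using assms by (simp add: R_def)
  qed
  then have "range (torsion_point N) \<subseteq> torsion_point N ` R"
    by blast
  ultimately show ?thesis
    using finite_subset by blast
qed

lemma target_cone_zero:
  assumes "{0} \<in> \<Sigma>" "\<And>\<sigma>. \<sigma> \<in> \<Sigma> \<Longrightarrow> 0 \<in> \<sigma>"
  shows "target_cone \<Sigma> A {0} = {0}"
proof -
  have "lat_map_real A 0 = 0"
    by (simp add: lat_map_real_def vec_eq_iff)
  then have "{\<tau>\<in>\<Sigma>. lat_map_real A ` {0} \<subseteq> \<tau>} = \<Sigma>"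
    using assms(2) by auto
  then show ?thesis
    using assms by (auto simp: target_cone_def)
qed

lemma toric_map_torsion_point:
  assumes "{0} \<in> \<Sigma>" "\<And>\<sigma>. \<sigma> \<in> \<Sigma> \<Longrightarrow> 0 \<in> \<sigma>"
  shows "toric_map \<Sigma> A (torsion_point N k) = torsion_point N (A *v k)"
  using target_cone_zero[OF assms]
  by (simp add: toric_map_def torsion_point_def torsion_char_def lattice_pairing_lat_map_dual fun_eq_iff)

lemma torsion_point_preperiodic:
  assumes "{0} \<in> \<Sigma>" "\<And>\<sigma>. \<sigma> \<in> \<Sigma> \<Longrightarrow> 0 \<in> \<sigma>" "0 < N"
  shows "\<exists>n m. n < m \<and> (toric_map \<Sigma> A ^^ n) (torsion_point N k) = (toric_map \<Sigma> A ^^ m) (torsion_point N k)"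
proof (rule preperiodic_if_finite_orbit)
  have "(toric_map \<Sigma> A ^^ j) (torsion_point N k) = torsion_point N (((*v) A ^^ j) k)" for j
    by (induction j) (simp_all add: toric_map_torsion_point[OF assms(1,2)])
  then have "range (\<lambda>j. (toric_map \<Sigma> A ^^ j) (torsion_point N k)) \<subseteq> range (torsion_point N)"
    by auto
  then show "finite (range (\<lambda>j. (toric_map \<Sigma> A ^^ j) (torsion_point N k)))"
    using finite_torsion_points[OF assms(3)] finite_subset by blast
qed

lemma eq_0_if_vanishes_on_torsion_points:
  fixes g :: "int ^ 'n \<Rightarrow> complex"
  assumes "finite {m. g m \<noteq> 0}"
    and vanish: "\<And>N k. 0 < N \<Longrightarrow> eval_fun g (torsion_point N k) = 0"
  shows "g m = 0"
proof -
  define S where "S = {m. g m \<noteq> 0}"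
  obtain w where w: "inj_on (lattice_pairing w) S"
    using exists_lattice_pairing_inj_on assms(1) unfolding S_def by blast
  have vanish_roots: "(\<Sum>m\<in>S. g m * z powi lattice_pairing w m) = 0"
    if "z \<in> {z. \<exists>N>0. z ^ N = 1}" for z
  proof -
    obtain N j where "0 < N" "z = unit_root N ^ j"
      using \<open>z \<in> _\<close> root_of_unity_eq_unit_root_power by blast
    \<comment> \<open>evaluate at the torsion point j w / N\<close>
    then have "torsion_char N (int j *s w) m = z powi lattice_pairing w m" for m
      by (simp add: torsion_char_def lattice_pairing_scale_left power_int_mult)
    then show ?thesis
      using vanish[OF \<open>0 < N\<close>, of "int j *s w"] by (simp add: eval_fun_def torsion_point_def S_def)
  qed
  show ?thesis
  proof (cases "m \<in> S")
    case True
    show ?thesis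
      by (rule laurent_coeff_eq_0_if_infinite_roots[OF _ w infinite_roots_of_unity _ _ True])
        (use assms(1) vanish_roots in \<open>auto simp: S_def power_0_left\<close>)
  qed (simp add: S_def)
qed

lemma zariski_dense_if_torsion_points:
  assumes "{0} \<in> \<Sigma>" "\<And>\<sigma>. \<sigma> \<in> \<Sigma> \<Longrightarrow> {0} face_of \<sigma>" "\<And>\<sigma>. \<sigma> \<in> \<Sigma> \<Longrightarrow> convex \<sigma>"
    and "\<And>N k. 0 < N \<Longrightarrow> torsion_point N k \<in> S"
  shows "zariski_dense \<Sigma> S"
  unfolding zariski_dense_def
proof (intro allI impI, elim conjE)
  fix C assume closed: "zariski_closed \<Sigma> C" and "S \<subseteq> C"
  show "C = toric_points \<Sigma>"
  proof
    show "C \<subseteq> toric_points \<Sigma>"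
      using closed by (simp add: zariski_closed_def)
  next
    show "toric_points \<Sigma> \<subseteq> C"
    proof
      fix q assume q: "q \<in> toric_points \<Sigma>"
      then have "fst q \<in> \<Sigma>"
        by (auto simp: toric_points_def)
      then obtain G where G: "\<forall>g\<in>G. regular_fun (fst q) g"
        and C_chart: "C \<inter> chart \<Sigma> (fst q) = {p \<in> chart \<Sigma> (fst q). \<forall>g\<in>G. eval_fun g p = 0}"
        using closed by (auto simp: zariski_closed_def)
      have "g m = 0" if "g \<in> G" for g m
      proof (rule eq_0_if_vanishes_on_torsion_points)
        show "finite {m. g m \<noteq> 0}"
          using G that by (simp add: regular_fun_def)
        fix N :: nat and k assume "0 < N"
        then have "torsion_point N k \<in> C \<inter> chart \<Sigma> (fst q)"
          using assms \<open>S \<subseteq> C\<close> \<open>fst q \<in> \<Sigma>\<close> torsion_point_in_toric_points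
          by (auto simp: chart_def torsion_point_def)
        then show "eval_fun g (torsion_point N k) = 0"
          using C_chart that by blast
      qed
      moreover have "q \<in> chart \<Sigma> (fst q)"
        using q \<open>fst q \<in> \<Sigma>\<close> assms(3) by (auto simp: chart_def face_of_refl)
      ultimately show "q \<in> C"
        using C_chart by (auto simp: eval_fun_def)
    qed
  qed
qed

theorem mainTheorem5:
  fixes \<Sigma> :: "(real ^ 'n) set set" and A :: "int ^ 'n ^ 'n"
  assumes "projective_fan \<Sigma>"
    and "simplicial_fan \<Sigma>"
    and "compatible_lat_map \<Sigma> A"
    and "toric_map \<Sigma> A ` toric_points \<Sigma> = toric_points \<Sigma>"
  shows "zariski_dense \<Sigma> (preperiodic_points (toric_map \<Sigma> A) (toric_points \<Sigma>))"
proof -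
  obtain V :: "(int ^ 'n) set" where interior: "interior (convex hull (vreal ` V)) \<noteq> {}"
    and \<Sigma>: "\<Sigma> = normal_fan (convex hull (vreal ` V))"
    using assms(1) unfolding projective_fan_def by blast
  have zero_cone: "{0} \<in> \<Sigma>"
    using zero_cone_in_normal_fan[OF convex_convex_hull interior] \<Sigma> by simp
  have zero_face: "{0} face_of \<sigma>" if "\<sigma> \<in> \<Sigma>" for \<sigma>
    using zero_face_of_normal_fan_cone[OF interior] that \<Sigma> by simp
  have convex: "convex \<sigma>" if "\<sigma> \<in> \<Sigma>" for \<sigma>
    using that \<Sigma> convex_normal_cone by (auto simp: normal_fan_def)
  have "torsion_point N k \<in> preperiodic_points (toric_map \<Sigma> A) (toric_points \<Sigma>)" if "0 < N" for N k
    using torsion_point_in_toric_points[OF zero_cone that]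
      torsion_point_preperiodic[OF zero_cone face_of_imp_subset[OF zero_face, THEN subsetD] that]
    by (simp add: preperiodic_points_def)
  then show ?thesis
    using zariski_dense_if_torsion_points[OF zero_cone zero_face convex] by blast
qed

end
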